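(* Let $\lambda\in\mathbb R$. The connected Lie subgroups of dimension two of $S_{3,\lambda}$ are exactly the following: (i) $\mathcal K_0=\{(x,y,0):x,y\in\mathbb R\}$, with Lie algebra $\operatorname{span}\{E_1,E_2\}$ (abelian); (ii) if $\lambda\neq0$: for each $a\in\mathbb R$, $\mathcal J_a=\{(x,\tfrac{e^{\lambda z}-1}{\lambda}a,z):x,z\in\mathbb R\}$, with Lie algebra $\operatorname{span}\{E_3+aE_2,E_1\}$, which is solvable and non-abelian; (iii) if $\lambda=0$: for each $a\in\mathbb R$, $\mathcal J_a=\{(x,az,z):x,z\in\mathbb R\}$, with Lie algebra $\operatorname{span}\{E_3+aE_2,E_1\}$, which is abelian.
   Context: For $\lambda\in\mathbb R$, $S_{3,\lambda}$ is $\mathbb R^3=\{(x,y,z)\}$ with product $(v_1,z_1)(v_2,z_2)=(v_1+M_{\lambda,z_1}v_2,\,z_1+z_2)$, where $v_i=(x_i,y_i)\in\mathbb R^2$ and $M_{\lambda,z}=\begin{pmatrix}e^{\lambda z}& ze^{\lambda z}\\ 0& e^{\lambda z}\end{pmatrix}$. Its Lie algebra $\mathfrak r_{3,\lambda}$ has basis of left-invariant vector fields $E_1=e^{\lambda z}\partial_x$, $E_2=ze^{\lambda z}\partial_x+e^{\lambda z}\partial_y$, $E_3=\partial_z$, with nonzero brackets $[E_3,E_1]=\lambda E_1$, $[E_3,E_2]=E_1+\lambda E_2$ ($\lambda=0$ gives the Heisenberg group). *)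

theory Defs
  imports "HOL-Analysis.Analysis"
begin

type_synonym pt = "real \<times> real \<times> real"

text \<open>The group S_{3,l}: (v1,z1)(v2,z2) = (v1 + M_{l,z1} v2, z1+z2),
  M_{l,z} = [[e^{lz}, z e^{lz}],[0, e^{lz}]].\<close>
definition smul :: "real \<Rightarrow> pt \<Rightarrow> pt \<Rightarrow> pt" where
  "smul l p q = (case p of (x1,y1,z1) \<Rightarrow> case q of (x2,y2,z2) \<Rightarrow>
     (x1 + exp (l*z1) * x2 + z1 * exp (l*z1) * y2, y1 + exp (l*z1) * y2, z1 + z2))"

definition sinv :: "real \<Rightarrow> pt \<Rightarrow> pt" where
  "sinv l p = (case p of (x,y,z) \<Rightarrow>
     (- exp (-(l*z)) * (x - z*y), - exp (-(l*z)) * y, -z))"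

definition ssubgroup :: "real \<Rightarrow> pt set \<Rightarrow> bool" where
  "ssubgroup l H \<longleftrightarrow> 0 \<in> H \<and> (\<forall>p\<in>H. \<forall>q\<in>H. smul l p q \<in> H) \<and> (\<forall>p\<in>H. sinv l p \<in> H)"

definition gen_subgroup :: "real \<Rightarrow> pt set \<Rightarrow> pt set" where
  "gen_subgroup l S = \<Inter> {H. ssubgroup l H \<and> S \<subseteq> H}"

text \<open>Left-invariant vector field X_v with X_v(0) = v: X_v(p) = d/dt (p \<cdot> t v) at t = 0.
  Thus E1 = lvf l (1,0,0), E2 = lvf l (0,1,0), E3 = lvf l (0,0,1).\<close>
definition lvf :: "real \<Rightarrow> pt \<Rightarrow> pt \<Rightarrow> pt" where
  "lvf l v p = vector_derivative (\<lambda>t. smul l p (t *\<^sub>R v)) (at 0)"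

definition vf_bracket :: "(pt \<Rightarrow> pt) \<Rightarrow> (pt \<Rightarrow> pt) \<Rightarrow> pt \<Rightarrow> pt" where
  "vf_bracket X Y p = frechet_derivative Y (at p) (X p) - frechet_derivative X (at p) (Y p)"

text \<open>A Lie subalgebra of r_{3,l}, identified with a subspace V of the tangent space at 0
  (v \<leftrightarrow> X_v).\<close>
definition lie_subalg :: "real \<Rightarrow> pt set \<Rightarrow> bool" where
  "lie_subalg l V \<longleftrightarrow> subspace V \<and>
     (\<forall>v\<in>V. \<forall>w\<in>V. \<exists>u\<in>V. vf_bracket (lvf l v) (lvf l w) = lvf l u)"

definition lie_abelian :: "real \<Rightarrow> pt set \<Rightarrow> bool" where
  "lie_abelian l V \<longleftrightarrow> (\<forall>v\<in>V. \<forall>w\<in>V. vf_bracket (lvf l v) (lvf l w) = (\<lambda>p. 0))"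

fun derived :: "real \<Rightarrow> pt set \<Rightarrow> nat \<Rightarrow> pt set" where
  "derived l V 0 = V"
| "derived l V (Suc k) = span {u. \<exists>v\<in>derived l V k. \<exists>w\<in>derived l V k.
      vf_bracket (lvf l v) (lvf l w) = lvf l u}"

definition lie_solvable :: "real \<Rightarrow> pt set \<Rightarrow> bool" where
  "lie_solvable l V \<longleftrightarrow> (\<exists>k. derived l V k = {0})"

definition one_param :: "real \<Rightarrow> (real \<Rightarrow> pt) \<Rightarrow> pt \<Rightarrow> bool" where
  "one_param l \<gamma> v \<longleftrightarrow> (\<forall>s t. \<gamma> (s + t) = smul l (\<gamma> s) (\<gamma> t)) \<and>
     (\<gamma> has_vector_derivative v) (at 0)"

definition exp_image :: "real \<Rightarrow> pt set \<Rightarrow> pt set" where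
  "exp_image l V = {\<gamma> t | \<gamma> v t. v \<in> V \<and> one_param l \<gamma> v}"

text \<open>The connected Lie subgroup with Lie algebra V (subgroup generated by exp(V)).\<close>
definition lie_subgroup_of :: "real \<Rightarrow> pt set \<Rightarrow> pt set" where
  "lie_subgroup_of l V = gen_subgroup l (exp_image l V)"

definition conn_lie_subgroup2 :: "real \<Rightarrow> pt set \<Rightarrow> bool" where
  "conn_lie_subgroup2 l H \<longleftrightarrow>
     (\<exists>V. lie_subalg l V \<and> dim V = 2 \<and> H = lie_subgroup_of l V)"

definition K0 :: "pt set" where
  "K0 = {(x, y, 0) | x y. True}"

definition J :: "real \<Rightarrow> real \<Rightarrow> pt set" where
  "J l a = (if l \<noteq> 0 then {(x, (exp (l*z) - 1) / l * a, z) | x z. True}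
            else {(x, a*z, z) | x z. True})"

end

theory Submission
  imports Defs
begin

text \<open>
  The left-invariant field with value v at the identity is explicit, so the bracket of two such
  fields is again left-invariant, with value given by a bilinear map on \<real>^3; every bracket
  lies in the plane span {E1, E2}, on which the bracket vanishes, hence every subalgebra is
  solvable. A two-dimensional subalgebra V is either that plane, or it contains a vector v with
  E3-component 1 together with a nonzero vector w of the plane; then [v, w] - l w is a multiple
  of E1, which forces E1 \<in> V and V = span {E3 + a E2, E1}.

  The coordinates of a one-parameter subgroup satisfy cocycle equations
  f (s + t) = f s + e^(ks) f t, whose solutions differentiable at 0 are multiples of the integral
  of e^(ks) over [0, t]. Hence the exponential image of V lies in K0 resp. J a, which are
  subgroups, and every element of these is a product of two elements of the exponential image.
\<close>

lemma exists_nonzero_in_kernel: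
  fixes f :: "'a::euclidean_space \<Rightarrow> real"
  assumes V: "subspace V" and f: "linear f" and dim: "dim V \<ge> 2"
  obtains w where "w \<in> V" "w \<noteq> 0" "f w = 0"
proof -
  have "\<not> inj_on f V"
  proof
    assume "inj_on f V"
    moreover have "span V = V"
      using V by (rule span_eq_iff[THEN iffD2])
    ultimately have "dim (f ` V) = dim V"
      using dim_image_eq[OF f, of V] by argo
    moreover have "dim (f ` V) \<le> 1"
      using dim_subset_UNIV[of "f ` V"] by simp
    ultimately show False
      using dim by simp
  qed
  then obtain x y where "x \<in> V" "y \<in> V" "f x = f y" "x \<noteq> y"
    by (auto simp: inj_on_def)
  then show thesis
    using that[of "x - y"] V f by (simp add: subspace_diff linear_diff)
qed

text \<open>exp_primitive k t and t_exp_primitive k t are the integrals of e^(ks) and s e^(ks)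
  over [0, t].\<close>
definition exp_primitive :: "real \<Rightarrow> real \<Rightarrow> real" where
  "exp_primitive k t = (if k = 0 then t else (exp (k * t) - 1) / k)"

definition t_exp_primitive :: "real \<Rightarrow> real \<Rightarrow> real" where
  "t_exp_primitive k t =
     (if k = 0 then t\<^sup>2 / 2 else t * exp (k * t) / k - (exp (k * t) - 1) / k\<^sup>2)"

lemma exp_primitive_0 [simp]: "exp_primitive k 0 = 0"
  by (simp add: exp_primitive_def)

lemma exp_primitive_add:
  "exp_primitive k (s + t) = exp_primitive k s + exp (k * s) * exp_primitive k t"
  by (simp add: exp_primitive_def exp_add distrib_left field_simps)

lemma exp_primitive_uminus: "exp_primitive k (- t) = - exp (- (k * t)) * exp_primitive k t"
  using exp_primitive_add[of k "- t" t] by (simp add: exp_minus field_simps)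

lemma exp_primitive_scale: "c * exp_primitive (k * c) t = exp_primitive k (c * t)"
  by (simp add: exp_primitive_def field_simps)

lemma has_real_derivative_exp_primitive:
  "(exp_primitive k has_real_derivative exp (k * t)) (at t)"
  unfolding exp_primitive_def
  by (cases "k = 0") (auto intro!: derivative_eq_intros)

lemma t_exp_primitive_add:
  "t_exp_primitive k (s + t) =
     t_exp_primitive k s + exp (k * s) * (t_exp_primitive k t + s * exp_primitive k t)"
  by (cases "k = 0")
    (simp_all add: t_exp_primitive_def exp_primitive_def exp_add distrib_left field_simps
      power2_eq_square)

lemma has_real_derivative_t_exp_primitive:
  "(t_exp_primitive k has_real_derivative t * exp (k * t)) (at t)"
  unfolding t_exp_primitive_def
  by (cases "k = 0") (auto intro!: derivative_eq_intros simp: field_simps power2_eq_square)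

lemma cocycle_eq_exp_primitive:
  fixes f :: "real \<Rightarrow> real"
  assumes add: "\<And>s t. f (s + t) = f s + exp (k * s) * f t"
    and deriv0: "(f has_real_derivative d) (at 0)"
  shows "f t = d * exp_primitive k t"
proof -
  have deriv: "(f has_real_derivative d * exp (k * x)) (at x)" for x
  proof -
    have "(\<lambda>h. f (h + x)) = (\<lambda>h. f x + exp (k * x) * f h)"
      by (rule ext) (metis add add.commute)
    then have "((\<lambda>h. f (h + x)) has_real_derivative d * exp (k * x)) (at 0)"
      using deriv0 by (auto intro!: derivative_eq_intros)
    then show ?thesis
      using DERIV_shift[of f _ 0 x] by simp
  qed
  have "(\<lambda>t. f t - d * exp_primitive k t) t = (\<lambda>t. f t - d * exp_primitive k t) 0"
    by (rule DERIV_isconst_all)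
      (auto intro!: derivative_eq_intros deriv has_real_derivative_exp_primitive)
  moreover have "f 0 = 0"
    using add[of 0 0] by simp
  ultimately show ?thesis
    by simp
qed

text \<open>The bilinear extension of [E3, E1] = l E1, [E3, E2] = E1 + l E2.\<close>
definition lie_bracket :: "real \<Rightarrow> pt \<Rightarrow> pt \<Rightarrow> pt" where
  "lie_bracket l v w = (case v of (x1, y1, z1) \<Rightarrow> case w of (x2, y2, z2) \<Rightarrow>
     (l * (z1 * x2 - z2 * x1) + (z1 * y2 - z2 * y1), l * (z1 * y2 - z2 * y1), 0))"

lemma lvf_apply:
  "lvf l (a, b, c) (x, y, z) = (exp (l * z) * (a + z * b), exp (l * z) * b, c)"
proof -
  have "((\<lambda>t. smul l (x, y, z) (t *\<^sub>R (a, b, c))) has_vector_derivative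
      (exp (l * z) * (a + z * b), exp (l * z) * b, c)) (at 0)"
    unfolding smul_def
    by (auto intro!: derivative_eq_intros has_vector_derivative_Pair
        simp: has_real_derivative_iff_has_vector_derivative[symmetric] algebra_simps)
  then show ?thesis
    unfolding lvf_def by (rule vector_derivative_at)
qed

lemma lvf_at_0 [simp]: "lvf l v 0 = v"
  by (cases v) (simp add: zero_prod_def lvf_apply)

lemma lvf_inj: "lvf l v = lvf l w \<Longrightarrow> v = w"
  by (metis lvf_at_0)

lemma lvf_0 [simp]: "lvf l 0 p = 0"
  by (cases p) (simp add: zero_prod_def lvf_apply)

lemma lvf_eq_0_iff: "lvf l v = (\<lambda>p. 0) \<longleftrightarrow> v = 0"
proof
  assume "lvf l v = (\<lambda>p. 0)"
  then show "v = 0" using lvf_at_0[of l v] by simp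
qed (simp add: fun_eq_iff)

lemma has_derivative_lvf:
  "(lvf l (a, b, c) has_derivative
     (\<lambda>h. snd (snd h) *\<^sub>R (exp (l * z) * (l * (a + z * b) + b), l * exp (l * z) * b, 0)))
   (at (x, y, z))"
proof -
  define G where "G = (\<lambda>z. (exp (l * z) * (a + z * b), exp (l * z) * b, c))"
  have lvf: "lvf l (a, b, c) = G \<circ> (\<lambda>p. snd (snd p))"
    by (auto simp: lvf_apply G_def fun_eq_iff)
  have G: "(G has_vector_derivative
      (exp (l * u) * (l * (a + u * b) + b), l * exp (l * u) * b, 0)) (at u)" for u
    unfolding G_def
    by (auto intro!: derivative_eq_intros has_vector_derivative_Pair
        simp: has_real_derivative_iff_has_vector_derivative[symmetric] algebra_simps)
  have height: "((\<lambda>p :: pt. snd (snd p)) has_derivative (\<lambda>p. snd (snd p))) (at (x, y, z))"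
    by (intro derivative_intros)
  show ?thesis
    unfolding lvf
    using diff_chain_at[OF height G[of "snd (snd (x, y, z))", unfolded has_vector_derivative_def]]
    by (simp add: o_def)
qed

lemma vf_bracket_lvf: "vf_bracket (lvf l v) (lvf l w) = lvf l (lie_bracket l v w)"
proof
  fix p :: pt
  obtain a b c a' b' c' x y z where "v = (a, b, c)" "w = (a', b', c')" "p = (x, y, z)"
    by (metis prod_cases3)
  moreover have "vf_bracket (lvf l (a, b, c)) (lvf l (a', b', c')) (x, y, z)
      = lvf l (lie_bracket l (a, b, c) (a', b', c')) (x, y, z)"
    unfolding vf_bracket_def frechet_derivative_at[OF has_derivative_lvf, symmetric]
    by (simp add: lvf_apply lie_bracket_def algebra_simps)
  ultimately show "vf_bracket (lvf l v) (lvf l w) p = lvf l (lie_bracket l v w) p"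
    by simp
qed

lemma lie_subalg_iff:
  "lie_subalg l V \<longleftrightarrow> subspace V \<and> (\<forall>v\<in>V. \<forall>w\<in>V. lie_bracket l v w \<in> V)"
  unfolding lie_subalg_def vf_bracket_lvf by (metis lvf_inj)

lemma lie_abelian_iff: "lie_abelian l V \<longleftrightarrow> (\<forall>v\<in>V. \<forall>w\<in>V. lie_bracket l v w = 0)"
  unfolding lie_abelian_def vf_bracket_lvf lvf_eq_0_iff ..

lemma derived_Suc_eq:
  "derived l V (Suc k) =
     span {lie_bracket l v w | v w. v \<in> derived l V k \<and> w \<in> derived l V k}"
  unfolding derived.simps vf_bracket_lvf by (metis lvf_inj)

lemma lie_bracket_horizontal: "snd (snd (lie_bracket l v w)) = 0"
  by (simp add: lie_bracket_def split: prod.splits)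

lemma lie_bracket_of_horizontal:
  "snd (snd v) = 0 \<Longrightarrow> snd (snd w) = 0 \<Longrightarrow> lie_bracket l v w = 0"
  by (cases v; cases w) (simp add: lie_bracket_def zero_prod_def)

lemma lie_solvable_all: "lie_solvable l V"
proof -
  have horizontal: "derived l V (Suc 0) \<subseteq> {p. snd (snd p) = 0}"
    unfolding derived_Suc_eq
    by (rule span_minimal) (auto simp: subspace_def lie_bracket_horizontal)
  have "derived l V 2 \<subseteq> {0}"
    unfolding numeral_2_eq_2 derived_Suc_eq[of l V "Suc 0"]
    by (rule span_minimal) (use horizontal lie_bracket_of_horizontal in blast, simp)
  moreover have "0 \<in> derived l V 2"
    by (simp add: numeral_2_eq_2 span_zero)
  ultimately show ?thesis
    unfolding lie_solvable_def by blast
qed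

lemma span_E1_E2: "span {(1, 0, 0), (0, 1, 0)} = {p :: pt. snd (snd p) = 0}"
proof
  show "span {(1, 0, 0), (0, 1, 0)} \<subseteq> {p :: pt. snd (snd p) = 0}"
    by (rule span_minimal) (auto simp: subspace_def)
  show "{p :: pt. snd (snd p) = 0} \<subseteq> span {(1, 0, 0), (0, 1, 0)}"
  proof
    fix p :: pt
    assume "p \<in> {p. snd (snd p) = 0}"
    then have "p = fst p *\<^sub>R (1, 0, 0) + fst (snd p) *\<^sub>R (0, 1, 0)"
      by (cases p) auto
    also have "\<dots> \<in> span {(1, 0, 0), (0, 1, 0)}"
      by (intro span_add span_scale span_base) auto
    finally show "p \<in> span {(1, 0, 0), (0, 1, 0)}" .
  qed
qed

lemma span_E3aE2_E1: "span {(0, a, 1), (1, 0, 0)} = {p :: pt. fst (snd p) = a * snd (snd p)}"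
proof
  show "span {(0, a, 1), (1, 0, 0)} \<subseteq> {p :: pt. fst (snd p) = a * snd (snd p)}"
    by (rule span_minimal) (auto simp: subspace_def algebra_simps)
  show "{p :: pt. fst (snd p) = a * snd (snd p)} \<subseteq> span {(0, a, 1), (1, 0, 0)}"
  proof
    fix p :: pt
    assume "p \<in> {p. fst (snd p) = a * snd (snd p)}"
    then have "p = snd (snd p) *\<^sub>R (0, a, 1) + fst p *\<^sub>R (1, 0, 0)"
      by (cases p) auto
    also have "\<dots> \<in> span {(0, a, 1), (1, 0, 0)}"
      by (intro span_add span_scale span_base) auto
    finally show "p \<in> span {(0, a, 1), (1, 0, 0)}" .
  qed
qed

lemma dim_span_E1_E2: "dim (span {(1 :: real, 0 :: real, 0 :: real), (0, 1, 0)}) = 2"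
proof -
  have "independent {(1 :: real, 0 :: real, 0 :: real), (0, 1, 0)}"
    by (auto simp: independent_insert span_singleton zero_prod_def)
  then show ?thesis
    by (simp add: dim_eq_card_independent)
qed

lemma dim_span_E3aE2_E1: "dim (span {(0 :: real, a, 1 :: real), (1, 0, 0)}) = 2"
proof -
  have "independent {(0 :: real, a, 1 :: real), (1, 0, 0)}"
    by (auto simp: independent_insert span_singleton zero_prod_def)
  then show ?thesis
    by (simp add: dim_eq_card_independent)
qed

lemma lie_subalg_E1_E2: "lie_subalg l (span {(1, 0, 0), (0, 1, 0)})"
  unfolding lie_subalg_iff
  by (intro conjI subspace_span) (simp add: span_E1_E2 lie_bracket_horizontal)

lemma lie_abelian_E1_E2: "lie_abelian l (span {(1, 0, 0), (0, 1, 0)})"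
  by (simp add: lie_abelian_iff span_E1_E2 lie_bracket_of_horizontal)

lemma lie_subalg_E3aE2_E1: "lie_subalg l (span {(0, a, 1), (1, 0, 0)})"
  unfolding lie_subalg_iff
  by (intro conjI subspace_span) (auto simp: span_E3aE2_E1 lie_bracket_def split: prod.splits)

lemma lie_abelian_E3aE2_E1_iff: "lie_abelian l (span {(0, a, 1), (1, 0, 0)}) \<longleftrightarrow> l = 0"
proof
  assume "lie_abelian l (span {(0, a, 1), (1, 0, 0)})"
  then have "lie_bracket l (0, a, 1) (1, 0, 0) = 0"
    by (simp add: lie_abelian_iff span_base)
  then show "l = 0"
    by (simp add: lie_bracket_def zero_prod_def)
next
  assume "l = 0"
  then show "lie_abelian l (span {(0, a, 1), (1, 0, 0)})"
    by (auto simp: lie_abelian_iff span_E3aE2_E1 lie_bracket_def zero_prod_def split: prod.splits)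
qed

lemma E1_in_lie_subalg:
  assumes L: "lie_subalg l V" and v: "(x0, b, 1) \<in> V"
    and wV: "w \<in> V" and w0: "w \<noteq> 0" and w_horizontal: "snd (snd w) = 0"
  shows "(1, 0, 0) \<in> V"
proof -
  have S: "subspace V"
    using L by (simp add: lie_subalg_iff)
  obtain s t where w: "w = (s, t, 0)" and st: "s \<noteq> 0 \<or> t \<noteq> 0"
    using w0 w_horizontal by (cases w) (auto simp: zero_prod_def)
  show ?thesis
  proof (cases "t = 0")
    case True
    then have "(1, 0, 0) = (1 / s) *\<^sub>R w"
      using st by (simp add: w)
    then show ?thesis
      using subspace_scale[OF S wV] by simp
  next
    case False
    \<comment> \<open>[v, w] - l w = t E1, because [E3, E2] = E1 + l E2\<close>
    have "(1, 0, 0) = (1 / t) *\<^sub>R (lie_bracket l (x0, b, 1) w - l *\<^sub>R w)"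
      using False by (simp add: w lie_bracket_def zero_prod_def)
    moreover have "lie_bracket l (x0, b, 1) w \<in> V"
      using L v wV by (simp add: lie_subalg_iff)
    ultimately show ?thesis
      using wV S by (simp add: subspace_diff subspace_scale)
  qed
qed

lemma lie_subalg_dim2_cases:
  assumes L: "lie_subalg l V" and D: "dim V = 2"
  obtains "V = span {(1, 0, 0), (0, 1, 0)}"
    | a where "V = span {(0, a, 1), (1, 0, 0)}"
proof -
  have S: "subspace V"
    using L by (simp add: lie_subalg_iff)
  show thesis
  proof (cases "\<forall>p\<in>V. snd (snd p) = 0")
    case True
    then have "V \<subseteq> span {(1, 0, 0), (0, 1, 0)}"
      by (auto simp: span_E1_E2)
    then have "V = span {(1, 0, 0), (0, 1, 0)}"
      by (rule subspace_dim_equal[OF S subspace_span]) (use dim_span_E1_E2 in \<open>simp add: D\<close>)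
    then show thesis
      by (rule that(1))
  next
    case False
    then obtain p where p: "p \<in> V" "snd (snd p) \<noteq> 0"
      by blast
    obtain x0 b where "(1 / snd (snd p)) *\<^sub>R p = (x0, b, 1)"
      using p(2) by (cases p) auto
    then have v: "(x0, b, 1) \<in> V"
      using subspace_scale[OF S p(1)] by metis
    have "linear (\<lambda>p :: pt. snd (snd p))"
      by (simp add: linear_iff)
    then obtain w where "w \<in> V" "w \<noteq> 0" "snd (snd w) = 0"
      by (rule exists_nonzero_in_kernel[OF S]) (simp_all add: D)
    then have E1: "(1, 0, 0) \<in> V"
      by (rule E1_in_lie_subalg[OF L v])
    have "(x0, b, 1) - x0 *\<^sub>R (1, 0, 0) \<in> V"
      by (intro subspace_diff subspace_scale S v E1)
    with E1 have "span {(0, b, 1), (1, 0, 0)} \<subseteq> V"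
      by (intro span_minimal S) auto
    then have "span {(0, b, 1), (1, 0, 0)} = V"
      by (rule subspace_dim_equal[OF subspace_span S])
        (use dim_span_E3aE2_E1[of b] in \<open>simp add: D\<close>)
    then show thesis
      by (rule that(2)[OF sym])
  qed
qed

lemma smul_coords:
  "fst (smul l p q) = fst p + exp (l * snd (snd p)) * (fst q + snd (snd p) * fst (snd q))"
  "fst (snd (smul l p q)) = fst (snd p) + exp (l * snd (snd p)) * fst (snd q)"
  "snd (snd (smul l p q)) = snd (snd p) + snd (snd q)"
  by (cases p; cases q; simp add: smul_def algebra_simps)+

lemma one_param_coord_derivs:
  assumes "one_param l g v"
  shows "((\<lambda>t. fst (snd (g t))) has_real_derivative fst (snd v)) (at 0)"
    and "((\<lambda>t. snd (snd (g t))) has_real_derivative snd (snd v)) (at 0)"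
  using assms unfolding one_param_def has_real_derivative_iff_has_vector_derivative
  by (auto intro!: bounded_linear.has_vector_derivative[OF bounded_linear_fst]
      bounded_linear.has_vector_derivative[OF bounded_linear_snd])

lemma one_param_z:
  assumes "one_param l g v"
  shows "snd (snd (g t)) = snd (snd v) * t"
proof -
  have "snd (snd (g t)) = snd (snd v) * exp_primitive 0 t"
  proof (rule cocycle_eq_exp_primitive[where f = "\<lambda>t. snd (snd (g t))"])
    show "snd (snd (g (s + t))) = snd (snd (g s)) + exp (0 * s) * snd (snd (g t))" for s t
      using assms by (simp add: one_param_def smul_coords)
  qed (rule one_param_coord_derivs(2)[OF assms])
  then show ?thesis
    by (simp add: exp_primitive_def)
qed

lemma one_param_y:
  assumes "one_param l g v"
  shows "fst (snd (g t)) = fst (snd v) * exp_primitive (l * snd (snd v)) t"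
proof (rule cocycle_eq_exp_primitive[where f = "\<lambda>t. fst (snd (g t))"])
  show "fst (snd (g (s + t))) = fst (snd (g s)) + exp (l * snd (snd v) * s) * fst (snd (g t))"
    for s t
    using assms one_param_z[OF assms, of s] by (simp add: one_param_def smul_coords mult.assoc)
qed (rule one_param_coord_derivs(1)[OF assms])

lemma one_param_horizontal: "snd (snd v) = 0 \<Longrightarrow> one_param l (\<lambda>t. t *\<^sub>R v) v"
  unfolding one_param_def
  by (cases v) (auto simp: smul_def algebra_simps intro!: derivative_eq_intros)

definition J_curve :: "real \<Rightarrow> real \<Rightarrow> real \<Rightarrow> pt" where
  "J_curve l a t = (a * t_exp_primitive l t, a * exp_primitive l t, t)"

lemma one_param_J_curve: "one_param l (J_curve l a) (0, a, 1)"
  unfolding one_param_def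
proof (intro conjI allI)
  show "J_curve l a (s + t) = smul l (J_curve l a s) (J_curve l a t)" for s t
    by (simp add: J_curve_def smul_def t_exp_primitive_add exp_primitive_add algebra_simps)
  show "(J_curve l a has_vector_derivative (0, a, 1)) (at 0)"
    unfolding J_curve_def
    by (auto intro!: has_vector_derivative_Pair derivative_eq_intros
        has_real_derivative_exp_primitive has_real_derivative_t_exp_primitive
        simp: has_real_derivative_iff_has_vector_derivative[symmetric])
qed

lemma gen_subgroup_least: "ssubgroup l H \<Longrightarrow> S \<subseteq> H \<Longrightarrow> gen_subgroup l S \<subseteq> H"
  unfolding gen_subgroup_def by blast

lemma gen_subgroup_smul: "p \<in> S \<Longrightarrow> q \<in> S \<Longrightarrow> smul l p q \<in> gen_subgroup l S"
  unfolding gen_subgroup_def ssubgroup_def by blast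

lemma exp_imageI: "one_param l g v \<Longrightarrow> v \<in> V \<Longrightarrow> g t \<in> exp_image l V"
  unfolding exp_image_def by blast

lemma scaleR_horizontal_in_exp_image:
  assumes "snd (snd v) = 0" and "v \<in> V"
  shows "t *\<^sub>R v \<in> exp_image l V"
  using exp_imageI[OF one_param_horizontal[OF assms(1)] assms(2)] by simp

lemma lie_subgroup_of_eqI:
  assumes "ssubgroup l H" and "exp_image l V \<subseteq> H"
    and "\<And>p. p \<in> H \<Longrightarrow> \<exists>q\<in>exp_image l V. \<exists>r\<in>exp_image l V. p = smul l q r"
  shows "lie_subgroup_of l V = H"
  unfolding lie_subgroup_of_def
proof
  show "gen_subgroup l (exp_image l V) \<subseteq> H"
    by (rule gen_subgroup_least[OF assms(1,2)])
  show "H \<subseteq> gen_subgroup l (exp_image l V)"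
  proof
    fix p
    assume "p \<in> H"
    then obtain q r where "q \<in> exp_image l V" "r \<in> exp_image l V" "p = smul l q r"
      using assms(3) by blast
    then show "p \<in> gen_subgroup l (exp_image l V)"
      by (simp add: gen_subgroup_smul)
  qed
qed

lemma K0_eq: "K0 = {p. snd (snd p) = 0}"
  by (auto simp: K0_def)

lemma J_eq: "J l a = {p. fst (snd p) = a * exp_primitive l (snd (snd p))}"
  by (auto simp: J_def exp_primitive_def)

lemma ssubgroup_K0: "ssubgroup l K0"
  by (auto simp: ssubgroup_def K0_eq smul_coords sinv_def split: prod.splits)

lemma ssubgroup_J: "ssubgroup l (J l a)"
  by (auto simp: ssubgroup_def J_eq smul_coords exp_primitive_add exp_primitive_uminus
      sinv_def algebra_simps split: prod.splits)

lemma lie_subgroup_of_E1_E2: "lie_subgroup_of l (span {(1, 0, 0), (0, 1, 0)}) = K0"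
proof (rule lie_subgroup_of_eqI[OF ssubgroup_K0])
  show "exp_image l (span {(1, 0, 0), (0, 1, 0)}) \<subseteq> K0"
    by (auto simp: exp_image_def span_E1_E2 K0_eq one_param_z)
next
  fix p :: pt
  assume "p \<in> K0"
  then obtain x y where "p = (x, y, 0)"
    by (auto simp: K0_def)
  then have p: "p = smul l (x *\<^sub>R (1, 0, 0)) (y *\<^sub>R (0, 1, 0))"
    by (simp add: smul_def)
  have q: "x *\<^sub>R (1, 0, 0) \<in> exp_image l (span {(1, 0, 0), (0, 1, 0)})"
    by (rule scaleR_horizontal_in_exp_image) (auto intro: span_base)
  have r: "y *\<^sub>R (0, 1, 0) \<in> exp_image l (span {(1, 0, 0), (0, 1, 0)})"
    by (rule scaleR_horizontal_in_exp_image) (auto intro: span_base)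
  show "\<exists>q\<in>exp_image l (span {(1, 0, 0), (0, 1, 0)}).
      \<exists>r\<in>exp_image l (span {(1, 0, 0), (0, 1, 0)}). p = smul l q r"
    by (intro bexI[OF _ q] bexI[OF _ r]) (fact p)
qed

lemma lie_subgroup_of_E3aE2_E1: "lie_subgroup_of l (span {(0, a, 1), (1, 0, 0)}) = J l a"
proof (rule lie_subgroup_of_eqI[OF ssubgroup_J])
  show "exp_image l (span {(0, a, 1), (1, 0, 0)}) \<subseteq> J l a"
  proof
    fix p
    assume "p \<in> exp_image l (span {(0, a, 1), (1, 0, 0)})"
    then obtain g v t where p: "p = g t" and g: "one_param l g v"
      and v: "fst (snd v) = a * snd (snd v)"
      by (auto simp: exp_image_def span_E3aE2_E1)
    show "p \<in> J l a"
      using one_param_y[OF g, of t] one_param_z[OF g, of t]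
      by (simp add: J_eq p v exp_primitive_scale[symmetric])
  qed
next
  fix p :: pt
  assume "p \<in> J l a"
  then obtain x z where "p = (x, a * exp_primitive l z, z)"
    by (cases p) (auto simp: J_eq)
  then have p: "p = smul l ((x - a * t_exp_primitive l z) *\<^sub>R (1, 0, 0)) (J_curve l a z)"
    by (simp add: J_curve_def smul_def)
  have q: "(x - a * t_exp_primitive l z) *\<^sub>R (1, 0, 0)
      \<in> exp_image l (span {(0, a, 1), (1, 0, 0)})"
    by (rule scaleR_horizontal_in_exp_image) (auto intro: span_base)
  have r: "J_curve l a z \<in> exp_image l (span {(0, a, 1), (1, 0, 0)})"
    by (rule exp_imageI[OF one_param_J_curve]) (auto intro: span_base)
  show "\<exists>q\<in>exp_image l (span {(0, a, 1), (1, 0, 0)}).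
      \<exists>r\<in>exp_image l (span {(0, a, 1), (1, 0, 0)}). p = smul l q r"
    by (intro bexI[OF _ q] bexI[OF _ r]) (fact p)
qed

lemma lie_subalg_dim2_lie_subgroup_of:
  assumes "lie_subalg l V" and "dim V = 2"
  shows "(V = span {(1, 0, 0), (0, 1, 0)} \<and> lie_subgroup_of l V = K0)
    \<or> (\<exists>a. V = span {(0, a, 1), (1, 0, 0)} \<and> lie_subgroup_of l V = J l a)"
  by (rule lie_subalg_dim2_cases[OF assms])
    (auto simp: lie_subgroup_of_E1_E2 lie_subgroup_of_E3aE2_E1)

lemma conn_lie_subgroup2_iff: "conn_lie_subgroup2 l H \<longleftrightarrow> H = K0 \<or> (\<exists>a. H = J l a)"
proof
  assume "conn_lie_subgroup2 l H"
  then obtain V where "lie_subalg l V" "dim V = 2" "H = lie_subgroup_of l V"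
    by (auto simp: conn_lie_subgroup2_def)
  then show "H = K0 \<or> (\<exists>a. H = J l a)"
    using lie_subalg_dim2_lie_subgroup_of by blast
next
  assume "H = K0 \<or> (\<exists>a. H = J l a)"
  then consider "H = K0" | a where "H = J l a"
    by blast
  then show "conn_lie_subgroup2 l H"
  proof cases
    case 1
    then show ?thesis
      unfolding conn_lie_subgroup2_def
      by (intro exI[of _ "span {(1, 0, 0), (0, 1, 0)} :: pt set"] conjI lie_subalg_E1_E2
          dim_span_E1_E2) (simp add: lie_subgroup_of_E1_E2)
  next
    case (2 a)
    then show ?thesis
      unfolding conn_lie_subgroup2_def
      by (intro exI[of _ "span {(0, a, 1), (1, 0, 0)} :: pt set"] conjI lie_subalg_E3aE2_E1
          dim_span_E3aE2_E1) (simp add: lie_subgroup_of_E3aE2_E1)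
  qed
qed

theorem mainTheorem2:
  fixes l :: real
  shows "{H. conn_lie_subgroup2 l H} = {K0} \<union> range (J l)
    \<and> (\<forall>V. lie_subalg l V \<and> dim V = 2 \<longrightarrow>
          (V = span {(1,0,0), (0,1,0)} \<and> lie_subgroup_of l V = K0)
        \<or> (\<exists>a. V = span {(0,a,1), (1,0,0)} \<and> lie_subgroup_of l V = J l a))
    \<and> lie_subalg l (span {(1,0,0), (0,1,0)}) \<and> dim (span {(1::real,0::real,0::real), (0,1,0)}) = 2
    \<and> lie_subgroup_of l (span {(1,0,0), (0,1,0)}) = K0
    \<and> lie_abelian l (span {(1,0,0), (0,1,0)})
    \<and> (\<forall>a. lie_subalg l (span {(0,a,1), (1,0,0)}) \<and> dim (span {(0::real,a,1::real), (1,0,0)}) = 2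
          \<and> lie_subgroup_of l (span {(0,a,1), (1,0,0)}) = J l a
          \<and> (l \<noteq> 0 \<longrightarrow> lie_solvable l (span {(0,a,1), (1,0,0)}) \<and> \<not> lie_abelian l (span {(0,a,1), (1,0,0)}))
          \<and> (l = 0 \<longrightarrow> lie_abelian l (span {(0,a,1), (1,0,0)})))"
proof -
  have "{H. conn_lie_subgroup2 l H} = {K0} \<union> range (J l)"
    by (auto simp: conn_lie_subgroup2_iff)
  with lie_subalg_dim2_lie_subgroup_of show ?thesis
    by (simp add: lie_subalg_E1_E2 dim_span_E1_E2 lie_subgroup_of_E1_E2 lie_abelian_E1_E2
        lie_subalg_E3aE2_E1 dim_span_E3aE2_E1 lie_subgroup_of_E3aE2_E1 lie_abelian_E3aE2_E1_iff
        lie_solvable_all del: dim_span)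
qed

end
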